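(* Let $(\mathbf C,I)$ be an orthogonally based finite-type chain complex of real inner product spaces and let $M$ be an $(n,n-1)$-free Morse matching on it, with Morse retraction $\Phi:\mathbf C^M\to\mathbf C$, $\Psi:\mathbf C\to\mathbf C^M$. Then (1) $\Phi_n:\mathbf C_n^M\to\mathbf C_n$ and (2) $\Psi_{n-1}^\dagger:\mathbf C^M_{n-1}\to\mathbf C_{n-1}$ are the subspace inclusions, and hence isometries.
   Context: Based chain complex: chain complex $(\mathbf C,\partial)$ of finite-dimensional real inner product spaces $\mathbf C_n$, $n\ge0$, with disjoint finite index sets $I_n$ and $\mathbf C_n=\bigoplus_{\alpha\in I_n}C_\alpha$; orthogonally based means $C_\alpha\perp C_{\alpha'}$ for $\alpha\ne\alpha'$. $\partial_{\beta,\alpha}=\pi_\beta\partial_n i_\alpha$. Graph: edges $\alpha\to\beta$ when $\partial_{\beta,\alpha}\ne0$. Morse matching: edge set $M$ with each cell on at most one edge, $\partial_{\beta,\alpha}$ an isomorphism for $\alpha\to\beta\in M$, and "directed path from $\alpha$ to $\beta$ in the graph with $M$ reversed" a partial order on each $I_n$; $M^0$ = unmatched cells. $M$ is $(n,n-1)$-free if no edge of $M$ joins an $n$-cell to an $(n-1)$-cell. With $\Gamma_{\beta,\alpha}$ the sum over directed paths from $\alpha$ to $\beta$ in the reversed graph of composites of $\partial_{\sigma_{i+1},\sigma_i}$ (ordinary steps) and $-\partial_{\sigma_i,\sigma_{i+1}}^{-1}$ (reversed matched edges), trivial path giving the identity: $\mathbf C^M_n=\bigoplus_{\alpha\in I_n\cap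 M^0}C_\alpha$ (restricted inner product), $\Phi(x)=\sum_{\beta\in I_n}\Gamma_{\beta,\alpha}(x)$ for $x\in C_\alpha$, $\alpha\in M^0\cap I_n$, and $\Psi(x)=\sum_{\beta\in M^0\cap I_n}\Gamma_{\beta,\alpha}(x)$ for $x\in C_\alpha$, $\alpha\in I_n$. $\dagger$ denotes adjoint. *)

theory Defs
  imports "HOL-Analysis.Analysis"
begin

text \<open>
The whole chain complex lives inside one real inner
product space of type 'v (think of it as the orthogonal sum of all C_n).
Cells are elements of a set I of type 'c; deg assigns to a cell its degree,
so I_k = cells_of I deg k.  Cell a is the subspace C_a.  The chain group
C_k is the (orthogonal direct) sum of the C_a with a in I_k.
\<close>

definition cells_of :: "'c set \<Rightarrow> ('c \<Rightarrow> nat) \<Rightarrow> nat \<Rightarrow> 'c set" where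
  "cells_of I deg k = {a \<in> I. deg a = k}"

definition chain_space ::
  "'c set \<Rightarrow> ('c \<Rightarrow> nat) \<Rightarrow> ('c \<Rightarrow> 'v::real_vector set) \<Rightarrow> nat \<Rightarrow> 'v set" where
  "chain_space I deg Cell k = span (\<Union>a \<in> cells_of I deg k. Cell a)"

definition orth_based_chain_complex ::
  "'c set \<Rightarrow> ('c \<Rightarrow> nat) \<Rightarrow> ('c \<Rightarrow> 'v::real_inner set) \<Rightarrow> ('v \<Rightarrow> 'v) \<Rightarrow> bool" where
  "orth_based_chain_complex I deg Cell d \<longleftrightarrow>
     (\<forall>k. finite (cells_of I deg k)) \<and>
     (\<forall>a \<in> I. subspace (Cell a) \<and> (\<exists>B. finite B \<and> span B = Cell a)) \<and>
     (\<forall>a \<in> I. \<forall>b \<in> I. a \<noteq> b \<longrightarrow> (\<forall>x \<in> Cell a. \<forall>y \<in> Cell b. x \<bullet> y = 0)) \<and>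
     linear d \<and>
     (\<forall>k. \<forall>x \<in> chain_space I deg Cell (Suc k). d x \<in> chain_space I deg Cell k) \<and>
     (\<forall>x \<in> chain_space I deg Cell 0. d x = 0) \<and>
     (\<forall>k. \<forall>x \<in> chain_space I deg Cell k. d (d x) = 0)"

text \<open>Direct-sum projection pi_b of a vector of (the sum of the C_g, g in J) onto C_b.\<close>
definition comp_proj :: "'c set \<Rightarrow> ('c \<Rightarrow> 'v::real_vector set) \<Rightarrow> 'c \<Rightarrow> 'v \<Rightarrow> 'v" where
  "comp_proj J Cell b x =
     (THE y. \<exists>f. (\<forall>g \<in> J. f g \<in> Cell g) \<and> x = (\<Sum>g \<in> J. f g) \<and> y = f b)"

text \<open>Matrix entry d_(b,a) = pi_b o d o i_a (applied to x in C_a).\<close>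
definition bd_block ::
  "'c set \<Rightarrow> ('c \<Rightarrow> nat) \<Rightarrow> ('c \<Rightarrow> 'v::real_vector set) \<Rightarrow> ('v \<Rightarrow> 'v) \<Rightarrow> 'c \<Rightarrow> 'c \<Rightarrow> 'v \<Rightarrow> 'v" where
  "bd_block I deg Cell d b a x = comp_proj (cells_of I deg (deg b)) Cell b (d x)"

definition cc_edge ::
  "'c set \<Rightarrow> ('c \<Rightarrow> nat) \<Rightarrow> ('c \<Rightarrow> 'v::real_vector set) \<Rightarrow> ('v \<Rightarrow> 'v) \<Rightarrow> 'c \<Rightarrow> 'c \<Rightarrow> bool" where
  "cc_edge I deg Cell d a b \<longleftrightarrow> a \<in> I \<and> b \<in> I \<and> deg a = Suc (deg b) \<and>
     (\<exists>x \<in> Cell a. bd_block I deg Cell d b a x \<noteq> 0)"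

definition rev_edge ::
  "'c set \<Rightarrow> ('c \<Rightarrow> nat) \<Rightarrow> ('c \<Rightarrow> 'v::real_vector set) \<Rightarrow> ('v \<Rightarrow> 'v) \<Rightarrow> ('c \<times> 'c) set
   \<Rightarrow> 'c \<Rightarrow> 'c \<Rightarrow> bool" where
  "rev_edge I deg Cell d M s t \<longleftrightarrow>
     (cc_edge I deg Cell d s t \<and> (s, t) \<notin> M) \<or> (t, s) \<in> M"

definition morse_matching ::
  "'c set \<Rightarrow> ('c \<Rightarrow> nat) \<Rightarrow> ('c \<Rightarrow> 'v::real_vector set) \<Rightarrow> ('v \<Rightarrow> 'v) \<Rightarrow> ('c \<times> 'c) set \<Rightarrow> bool" where
  "morse_matching I deg Cell d M \<longleftrightarrow>
     M \<subseteq> {(a, b). cc_edge I deg Cell d a b} \<and>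
     (\<forall>e \<in> M. \<forall>e' \<in> M. e \<noteq> e' \<longrightarrow> {fst e, snd e} \<inter> {fst e', snd e'} = {}) \<and>
     (\<forall>(a, b) \<in> M. bij_betw (bd_block I deg Cell d b a) (Cell a) (Cell b)) \<and>
     (\<forall>k. \<forall>a \<in> cells_of I deg k. \<forall>b \<in> cells_of I deg k.
        (rev_edge I deg Cell d M)\<^sup>*\<^sup>* a b \<and> (rev_edge I deg Cell d M)\<^sup>*\<^sup>* b a \<longrightarrow> a = b)"

definition unmatched :: "'c set \<Rightarrow> ('c \<times> 'c) set \<Rightarrow> 'c set" where
  "unmatched I M = {a \<in> I. \<forall>(s, t) \<in> M. a \<noteq> s \<and> a \<noteq> t}"

definition nn1_free :: "('c \<Rightarrow> nat) \<Rightarrow> ('c \<times> 'c) set \<Rightarrow> nat \<Rightarrow> bool" where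
  "nn1_free deg M n \<longleftrightarrow> \<not> (\<exists>(a, b) \<in> M. deg a = n \<and> deg b = n - 1)"

definition rpaths ::
  "'c set \<Rightarrow> ('c \<Rightarrow> nat) \<Rightarrow> ('c \<Rightarrow> 'v::real_vector set) \<Rightarrow> ('v \<Rightarrow> 'v) \<Rightarrow> ('c \<times> 'c) set
   \<Rightarrow> 'c \<Rightarrow> 'c \<Rightarrow> 'c list set" where
  "rpaths I deg Cell d M a b =
     {p. p \<noteq> [] \<and> hd p = a \<and> last p = b \<and> successively (rev_edge I deg Cell d M) p}"

definition step_map ::
  "'c set \<Rightarrow> ('c \<Rightarrow> nat) \<Rightarrow> ('c \<Rightarrow> 'v::real_vector set) \<Rightarrow> ('v \<Rightarrow> 'v) \<Rightarrow> ('c \<times> 'c) set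
   \<Rightarrow> 'c \<Rightarrow> 'c \<Rightarrow> 'v \<Rightarrow> 'v" where
  "step_map I deg Cell d M s t x =
     (if (t, s) \<in> M then - inv_into (Cell t) (bd_block I deg Cell d s t) x
      else bd_block I deg Cell d t s x)"

fun path_map ::
  "'c set \<Rightarrow> ('c \<Rightarrow> nat) \<Rightarrow> ('c \<Rightarrow> 'v::real_vector set) \<Rightarrow> ('v \<Rightarrow> 'v) \<Rightarrow> ('c \<times> 'c) set
   \<Rightarrow> 'c list \<Rightarrow> 'v \<Rightarrow> 'v" where
  "path_map I deg Cell d M [] x = x"
| "path_map I deg Cell d M [s] x = x"
| "path_map I deg Cell d M (s # t # ps) x =
     path_map I deg Cell d M (t # ps) (step_map I deg Cell d M s t x)"

definition Gamma ::
  "'c set \<Rightarrow> ('c \<Rightarrow> nat) \<Rightarrow> ('c \<Rightarrow> 'v::real_vector set) \<Rightarrow> ('v \<Rightarrow> 'v) \<Rightarrow> ('c \<times> 'c) set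
   \<Rightarrow> 'c \<Rightarrow> 'c \<Rightarrow> 'v \<Rightarrow> 'v" where
  "Gamma I deg Cell d M b a x = (\<Sum>p \<in> rpaths I deg Cell d M a b. path_map I deg Cell d M p x)"

definition morse_space ::
  "'c set \<Rightarrow> ('c \<Rightarrow> nat) \<Rightarrow> ('c \<Rightarrow> 'v::real_vector set) \<Rightarrow> ('c \<times> 'c) set \<Rightarrow> nat \<Rightarrow> 'v set" where
  "morse_space I deg Cell M k = span (\<Union>a \<in> cells_of I deg k \<inter> unmatched I M. Cell a)"

definition morse_Phi ::
  "'c set \<Rightarrow> ('c \<Rightarrow> nat) \<Rightarrow> ('c \<Rightarrow> 'v::real_vector set) \<Rightarrow> ('v \<Rightarrow> 'v) \<Rightarrow> ('c \<times> 'c) set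
   \<Rightarrow> nat \<Rightarrow> 'v \<Rightarrow> 'v" where
  "morse_Phi I deg Cell d M k x =
     (\<Sum>a \<in> cells_of I deg k \<inter> unmatched I M. \<Sum>b \<in> cells_of I deg k.
        Gamma I deg Cell d M b a (comp_proj (cells_of I deg k) Cell a x))"

definition morse_Psi ::
  "'c set \<Rightarrow> ('c \<Rightarrow> nat) \<Rightarrow> ('c \<Rightarrow> 'v::real_vector set) \<Rightarrow> ('v \<Rightarrow> 'v) \<Rightarrow> ('c \<times> 'c) set
   \<Rightarrow> nat \<Rightarrow> 'v \<Rightarrow> 'v" where
  "morse_Psi I deg Cell d M k x =
     (\<Sum>a \<in> cells_of I deg k. \<Sum>b \<in> cells_of I deg k \<inter> unmatched I M.
        Gamma I deg Cell d M b a (comp_proj (cells_of I deg k) Cell a x))"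

definition is_adjoint_between :: "'v::real_inner set \<Rightarrow> 'v set \<Rightarrow> ('v \<Rightarrow> 'v) \<Rightarrow> ('v \<Rightarrow> 'v) \<Rightarrow> bool" where
  "is_adjoint_between X Y f g \<longleftrightarrow>
     (\<forall>x \<in> X. f x \<in> Y) \<and> (\<forall>y \<in> Y. g y \<in> X) \<and> (\<forall>x \<in> X. \<forall>y \<in> Y. f x \<bullet> y = x \<bullet> g y)"

end

theory Submission
  imports Defs
begin

(*
  In the graph with M reversed, the only steps that raise the degree are reversed matched
  edges, and (n,n-1)-freeness rules these out between degrees n-1 and n; so a path that
  enters degree < n never returns to degree n.  A path from an unmatched n-cell starts with
  a boundary step, hence ends in degree n only if it is trivial; a path inside degrees < n
  ending at an unmatched (n-1)-cell would have to enter it by a boundary step from degree n,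
  hence is trivial as well.  So Gamma is the identity on these blocks: Phi_n is the
  inclusion of C^M_n, and Psi_(n-1) is the orthogonal projection of C_(n-1) onto C^M_(n-1),
  whose adjoint is the inclusion.
*)

definition finite_orthogonal_family :: "'a set \<Rightarrow> ('a \<Rightarrow> 'v::real_inner set) \<Rightarrow> bool" where
  "finite_orthogonal_family J S \<longleftrightarrow> finite J \<and> (\<forall>a\<in>J. subspace (S a)) \<and>
     (\<forall>a\<in>J. \<forall>b\<in>J. a \<noteq> b \<longrightarrow> (\<forall>x\<in>S a. \<forall>y\<in>S b. x \<bullet> y = 0))"

lemma finite_orthogonal_family_orthogonal:
  assumes "finite_orthogonal_family J S" "a \<in> J" "b \<in> J" "a \<noteq> b" "x \<in> S a" "y \<in> S b"
  shows "x \<bullet> y = 0"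
  using assms unfolding finite_orthogonal_family_def by blast

lemma span_UN_subspaces_decompose:
  fixes S :: "'a \<Rightarrow> 'v::real_vector set"
  assumes "finite J" "\<forall>a\<in>J. subspace (S a)" "x \<in> span (\<Union>a\<in>J. S a)"
  obtains f where "\<forall>a\<in>J. f a \<in> S a" "x = sum f J"
  using assms
proof (induction J arbitrary: x thesis rule: finite_induct)
  case empty
  then show ?case by auto
next
  case (insert j J)
  have "x \<in> span (S j \<union> (\<Union>a\<in>J. S a))" using insert.prems by simp
  then obtain u v where uv: "x = u + v" "u \<in> span (S j)" "v \<in> span (\<Union>a\<in>J. S a)"
    unfolding span_Un by blast
  have u: "u \<in> S j" using uv(2) insert.prems span_eq_iff by blast
  obtain f where f: "\<forall>a\<in>J. f a \<in> S a" "v = sum f J" using insert uv(3) by blast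
  have "sum (f(j := u)) J = sum f J" using insert.hyps by (intro sum.cong) auto
  then show ?case using insert.prems(1)[of "f(j := u)"] f u uv insert.hyps by auto
qed

lemma orthogonal_components_unique:
  fixes f g :: "'a \<Rightarrow> 'v::real_inner"
  assumes fam: "finite_orthogonal_family J S"
    and f: "\<forall>a\<in>J. f a \<in> S a" and g: "\<forall>a\<in>J. g a \<in> S a"
    and sums: "sum f J = sum g J" and b: "b \<in> J"
  shows "f b = g b"
proof -
  define h where "h a = f a - g a" for a
  have hS: "\<forall>a\<in>J. h a \<in> S a"
    using fam f g by (auto simp: h_def finite_orthogonal_family_def subspace_diff)
  have "0 = sum h J \<bullet> h b" using sums by (simp add: h_def sum_subtractf)
  also have "\<dots> = (\<Sum>a\<in>J. h a \<bullet> h b)" by (simp add: inner_sum_left)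
  also have "\<dots> = h b \<bullet> h b"
    using fam hS b unfolding finite_orthogonal_family_def
    by (subst sum.remove[of J b]) (auto intro!: sum.neutral, blast)
  finally show ?thesis by (simp add: h_def)
qed

lemma comp_proj_sum_subfamily:
  assumes fam: "finite_orthogonal_family J S" and "K \<subseteq> J"
    and f: "\<forall>a\<in>K. f a \<in> S a" and "b \<in> J"
  shows "comp_proj J S b (sum f K) = (if b \<in> K then f b else (0::'v::real_inner))"
proof -
  define f' where "f' a = (if a \<in> K then f a else 0)" for a
  have f': "\<forall>a\<in>J. f' a \<in> S a"
    using fam f by (auto simp: f'_def finite_orthogonal_family_def subspace_0)
  have "sum f' J = sum f K"
    using fam \<open>K \<subseteq> J\<close> unfolding f'_def finite_orthogonal_family_def
    by (simp add: sum.If_cases Int_absorb1)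
  then have "comp_proj J S b (sum f K) = f' b"
    unfolding comp_proj_def
    using orthogonal_components_unique[OF fam _ f'] f' \<open>b \<in> J\<close> by (intro the_equality) metis+
  then show ?thesis by (simp add: f'_def)
qed

lemma sum_comp_proj_subfamily:
  assumes fam: "finite_orthogonal_family J S" and KJ: "K \<subseteq> J"
    and x: "x \<in> span (\<Union>a\<in>K. S a)"
  shows "(\<Sum>a\<in>K. comp_proj J S a x) = (x::'v::real_inner)"
proof -
  have "finite K" "\<forall>a\<in>K. subspace (S a)"
    using fam KJ finite_subset unfolding finite_orthogonal_family_def by auto
  then obtain f where f: "\<forall>a\<in>K. f a \<in> S a" "x = sum f K"
    using x by (rule span_UN_subspaces_decompose)
  have "(\<Sum>a\<in>K. comp_proj J S a x) = sum f K"
    using comp_proj_sum_subfamily[OF fam KJ f(1)] KJ f(2) by (intro sum.cong) auto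
  then show ?thesis using f(2) by simp
qed

lemma comp_proj_mem:
  assumes fam: "finite_orthogonal_family J S"
    and x: "x \<in> span (\<Union>a\<in>J. S a)" and b: "b \<in> J"
  shows "comp_proj J S b x \<in> (S b :: 'v::real_inner set)"
proof -
  have "finite J" "\<forall>a\<in>J. subspace (S a)"
    using fam unfolding finite_orthogonal_family_def by auto
  then obtain f where f: "\<forall>a\<in>J. f a \<in> S a" "x = sum f J"
    using x by (rule span_UN_subspaces_decompose)
  show ?thesis using comp_proj_sum_subfamily[OF fam order_refl f(1) b] f b by simp
qed

lemma inner_sum_comp_proj_subfamily:
  assumes fam: "finite_orthogonal_family J S" and KJ: "K \<subseteq> J"
    and x: "x \<in> span (\<Union>a\<in>J. S a)" and y: "y \<in> span (\<Union>a\<in>K. S a)"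
  shows "(\<Sum>a\<in>K. comp_proj J S a x) \<bullet> y = (x::'v::real_inner) \<bullet> y"
proof -
  have "comp_proj J S g x \<bullet> y = 0" if g: "g \<in> J - K" for g
  proof -
    have "orthogonal (comp_proj J S g x) z" if z: "z \<in> (\<Union>a\<in>K. S a)" for z
    proof -
      obtain a where "a \<in> K" "z \<in> S a" using z by blast
      moreover have "comp_proj J S g x \<in> S g" using comp_proj_mem[OF fam x] g by blast
      ultimately show ?thesis
        using finite_orthogonal_family_orthogonal[OF fam] g KJ unfolding orthogonal_def by blast
    qed
    then show ?thesis using orthogonal_to_span[OF y] by (simp add: orthogonal_def)
  qed
  then have "(\<Sum>a\<in>J - K. comp_proj J S a x) \<bullet> y = 0"
    by (simp add: inner_sum_left)
  moreover have "(\<Sum>a\<in>J. comp_proj J S a x) =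
      (\<Sum>a\<in>J - K. comp_proj J S a x) + (\<Sum>a\<in>K. comp_proj J S a x)"
    using fam KJ unfolding finite_orthogonal_family_def by (simp add: sum.subset_diff)
  ultimately show ?thesis
    using sum_comp_proj_subfamily[OF fam order_refl x] by (metis add_0 inner_add_left)
qed

lemma successively_invariant:
  assumes "successively R xs" "xs \<noteq> []" "P (hd xs)" "\<And>x y. R x y \<Longrightarrow> P x \<Longrightarrow> P y"
  shows "\<forall>x\<in>set xs. P x"
  using assms(1-3)
proof (induction xs rule: induct_list012)
  case (3 x y zs)
  have "R x y" "successively R (y # zs)" using "3.prems"(1) by simp_all
  moreover have "P x" using "3.prems"(3) by simp
  ultimately have "P y" by (blast intro: assms(4))
  then have "\<forall>z\<in>set (y # zs). P z" using "3.IH"(2) \<open>successively R (y # zs)\<close> by simp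
  then show ?case using \<open>P x\<close> by simp
qed simp_all

lemma successively_last_step:
  assumes "successively R xs" "butlast xs \<noteq> []"
  shows "\<exists>s\<in>set xs. R s (last xs)"
proof -
  have "xs \<noteq> []" using assms(2) by auto
  then have "successively R (butlast xs @ [last xs])" using assms(1) by simp
  then have "R (last (butlast xs)) (last xs)" using assms(2) by (simp add: successively_append_iff)
  moreover have "last (butlast xs) \<in> set xs" using assms(2) by (meson in_set_butlastD last_in_set)
  ultimately show ?thesis by blast
qed

lemma rev_edge_unmatched:
  "rev_edge I deg Cell d M s t \<Longrightarrow> s \<in> unmatched I M \<or> t \<in> unmatched I M
    \<Longrightarrow> cc_edge I deg Cell d s t"
  unfolding rev_edge_def unmatched_def by auto

lemma rev_edge_deg_less:
  assumes mm: "morse_matching I deg Cell d M" and free: "nn1_free deg M n"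
    and st: "rev_edge I deg Cell d M s t" and s: "deg s < n"
  shows "deg t < n"
  using st unfolding rev_edge_def
proof (elim disjE conjE)
  assume "cc_edge I deg Cell d s t"
  then show ?thesis using s unfolding cc_edge_def by simp
next
  assume ts: "(t, s) \<in> M"
  then have "deg t = Suc (deg s)" using mm unfolding morse_matching_def cc_edge_def by auto
  moreover have "\<not> (deg t = n \<and> deg s = n - 1)" using free ts unfolding nn1_free_def by blast
  ultimately show ?thesis using s by linarith
qed

lemma rpaths_deg_less:
  assumes mm: "morse_matching I deg Cell d M" and free: "nn1_free deg M n"
    and p: "p \<in> rpaths I deg Cell d M a b" and a: "deg a < n"
  shows "\<forall>x\<in>set p. deg x < n"
proof -
  have "successively (rev_edge I deg Cell d M) p" "p \<noteq> []" "deg (hd p) < n"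
    using p a unfolding rpaths_def by auto
  then show ?thesis by (rule successively_invariant[OF _ _ _ rev_edge_deg_less[OF mm free]])
qed

lemma rpaths_from_unmatched_trivial:
  assumes mm: "morse_matching I deg Cell d M" and free: "nn1_free deg M n"
    and p: "p \<in> rpaths I deg Cell d M a b"
    and a: "a \<in> unmatched I M" "deg a = n" and b: "deg b = n"
  shows "p = [a]"
proof (rule ccontr)
  assume "p \<noteq> [a]"
  moreover have "p \<noteq> []" "hd p = a" using p unfolding rpaths_def by auto
  ultimately obtain q where "p = a # q" and "q \<noteq> []"
    by (metis list.collapse)
  then have "rev_edge I deg Cell d M a (hd q)" and q: "q \<in> rpaths I deg Cell d M (hd q) b"
    using p unfolding rpaths_def by (auto simp: successively_Cons)
  from this(1) have "deg (hd q) < n"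
    using rev_edge_unmatched a unfolding cc_edge_def by fastforce
  then have "\<forall>x\<in>set q. deg x < n" by (rule rpaths_deg_less[OF mm free q])
  moreover have "b \<in> set q" using q \<open>q \<noteq> []\<close> unfolding rpaths_def by auto
  ultimately show False using b by auto
qed

lemma rpaths_to_unmatched_trivial:
  assumes mm: "morse_matching I deg Cell d M" and free: "nn1_free deg M (Suc k)"
    and p: "p \<in> rpaths I deg Cell d M a b"
    and a: "deg a = k" and b: "b \<in> unmatched I M" "deg b = k"
  shows "p = [a]"
proof (rule ccontr)
  assume "p \<noteq> [a]"
  with p have "butlast p \<noteq> []" unfolding rpaths_def by (cases p) auto
  then obtain s where s: "s \<in> set p" "rev_edge I deg Cell d M s b"
    using p successively_last_step unfolding rpaths_def by blast
  then have "deg s = Suc k" using rev_edge_unmatched b unfolding cc_edge_def by fastforce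
  moreover have "deg s < Suc k" using rpaths_deg_less[OF mm free p] a s(1) by simp
  ultimately show False by simp
qed

lemma Gamma_eq_delta:
  assumes "\<And>p. p \<in> rpaths I deg Cell d M a b \<Longrightarrow> p = [a]"
  shows "Gamma I deg Cell d M b a x = (if b = a then x else 0)"
proof -
  have "rpaths I deg Cell d M a b \<subseteq> {[a]}" using assms by blast
  moreover have "[a] \<in> rpaths I deg Cell d M a b \<longleftrightarrow> b = a" unfolding rpaths_def by auto
  ultimately have "rpaths I deg Cell d M a b = (if b = a then {[a]} else {})" by auto
  then show ?thesis unfolding Gamma_def by simp
qed

lemma orth_based_chain_complex_cells:
  "orth_based_chain_complex I deg Cell d \<Longrightarrow> finite_orthogonal_family (cells_of I deg k) Cell"
  unfolding orth_based_chain_complex_def finite_orthogonal_family_def cells_of_def by auto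

lemma morse_space_subset_chain_space: "morse_space I deg Cell M k \<subseteq> chain_space I deg Cell k"
  unfolding morse_space_def chain_space_def by (intro span_mono) auto

lemma morse_Phi_morse_space:
  assumes cc: "orth_based_chain_complex I deg Cell d" and mm: "morse_matching I deg Cell d M"
    and free: "nn1_free deg M n" and x: "x \<in> morse_space I deg Cell M n"
  shows "morse_Phi I deg Cell d M n x = x"
proof -
  let ?J = "cells_of I deg n" and ?K = "cells_of I deg n \<inter> unmatched I M"
  have fam: "finite_orthogonal_family ?J Cell" using cc by (rule orth_based_chain_complex_cells)
  have Gamma: "Gamma I deg Cell d M b a v = (if b = a then v else 0)"
    if "a \<in> ?K" "b \<in> ?J" for a b v
    using that
    by (intro Gamma_eq_delta rpaths_from_unmatched_trivial[OF mm free]) (auto simp: cells_of_def)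
  have "morse_Phi I deg Cell d M n x =
      (\<Sum>a\<in>?K. \<Sum>b\<in>?J. if b = a then comp_proj ?J Cell a x else 0)"
    unfolding morse_Phi_def using Gamma by (intro sum.cong refl) auto
  also have "\<dots> = (\<Sum>a\<in>?K. comp_proj ?J Cell a x)"
    using fam unfolding finite_orthogonal_family_def by (intro sum.cong refl) auto
  also have "\<dots> = x"
    using x unfolding morse_space_def by (intro sum_comp_proj_subfamily[OF fam]) auto
  finally show ?thesis .
qed

lemma morse_Psi_eq_sum_comp_proj:
  assumes mm: "morse_matching I deg Cell d M" and free: "nn1_free deg M (Suc k)"
    and fin: "finite (cells_of I deg k)"
  shows "morse_Psi I deg Cell d M k x =
    (\<Sum>a\<in>cells_of I deg k \<inter> unmatched I M. comp_proj (cells_of I deg k) Cell a x)"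
proof -
  let ?J = "cells_of I deg k" and ?K = "cells_of I deg k \<inter> unmatched I M"
  have Gamma: "Gamma I deg Cell d M b a v = (if b = a then v else 0)"
    if "a \<in> ?J" "b \<in> ?K" for a b v
    using that
    by (intro Gamma_eq_delta rpaths_to_unmatched_trivial[OF mm free]) (auto simp: cells_of_def)
  have "morse_Psi I deg Cell d M k x =
      (\<Sum>a\<in>?J. \<Sum>b\<in>?K. if b = a then comp_proj ?J Cell a x else 0)"
    unfolding morse_Psi_def using Gamma by (intro sum.cong refl) auto
  also have "\<dots> = (\<Sum>a\<in>?J. if a \<in> ?K then comp_proj ?J Cell a x else 0)"
    using fin by (intro sum.cong refl) auto
  also have "\<dots> = (\<Sum>a\<in>?K. comp_proj ?J Cell a x)"
    using fin by (simp add: sum.If_cases Int_absorb1)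
  finally show ?thesis .
qed

lemma morse_Psi_adjoint_inclusion:
  assumes cc: "orth_based_chain_complex I deg Cell d" and mm: "morse_matching I deg Cell d M"
    and free: "nn1_free deg M (Suc k)"
  shows "is_adjoint_between (chain_space I deg Cell k) (morse_space I deg Cell M k)
    (morse_Psi I deg Cell d M k) (\<lambda>y. y)"
proof -
  let ?J = "cells_of I deg k" and ?K = "cells_of I deg k \<inter> unmatched I M"
  have fam: "finite_orthogonal_family ?J Cell" using cc by (rule orth_based_chain_complex_cells)
  then have Psi: "morse_Psi I deg Cell d M k x = (\<Sum>a\<in>?K. comp_proj ?J Cell a x)" for x
    unfolding finite_orthogonal_family_def by (intro morse_Psi_eq_sum_comp_proj[OF mm free]) auto
  have "morse_Psi I deg Cell d M k x \<in> morse_space I deg Cell M k"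
    if "x \<in> chain_space I deg Cell k" for x
    unfolding Psi morse_space_def
    using comp_proj_mem[OF fam that[unfolded chain_space_def]]
    by (intro span_sum span_base) auto
  moreover have "morse_Psi I deg Cell d M k x \<bullet> y = x \<bullet> y"
    if "x \<in> chain_space I deg Cell k" "y \<in> morse_space I deg Cell M k" for x y
    unfolding Psi using that unfolding chain_space_def morse_space_def
    by (intro inner_sum_comp_proj_subfamily[OF fam]) auto
  ultimately show ?thesis
    using morse_space_subset_chain_space unfolding is_adjoint_between_def by blast
qed

theorem mainTheorem11:
  fixes I :: "'c set" and deg :: "'c \<Rightarrow> nat" and Cell :: "'c \<Rightarrow> 'v::real_inner set"
    and d :: "'v \<Rightarrow> 'v" and M :: "('c \<times> 'c) set" and n :: nat
  assumes "orth_based_chain_complex I deg Cell d"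
    and "morse_matching I deg Cell d M"
    and "n \<ge> 1"
    and "nn1_free deg M n"
  shows "(\<forall>x \<in> morse_space I deg Cell M n. morse_Phi I deg Cell d M n x = x)
       \<and> (\<forall>x \<in> morse_space I deg Cell M n. norm (morse_Phi I deg Cell d M n x) = norm x)
       \<and> is_adjoint_between (chain_space I deg Cell (n - 1)) (morse_space I deg Cell M (n - 1))
           (morse_Psi I deg Cell d M (n - 1)) (\<lambda>y. y)"
proof -
  have free: "nn1_free deg M (Suc (n - 1))" using assms(3,4) by simp
  have "\<forall>x \<in> morse_space I deg Cell M n. morse_Phi I deg Cell d M n x = x"
    using morse_Phi_morse_space[OF assms(1,2,4)] by blast
  moreover have "is_adjoint_between (chain_space I deg Cell (n - 1))
      (morse_space I deg Cell M (n - 1)) (morse_Psi I deg Cell d M (n - 1)) (\<lambda>y. y)"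
    by (rule morse_Psi_adjoint_inclusion[OF assms(1,2) free])
  ultimately show ?thesis by simp
qed

end
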